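(* Let $\phi$ be a $C^\infty$ function on $\mathbb{R}$ supported in $[-1,1]$ with $\phi\ge0$ and $\int_{-1}^1\phi(t)\,dt=1$. For a function $f$ on $(0,\infty)$ and $\varepsilon>0$ define $f_\varepsilon(x):=\int_{-1}^1\phi(t)f(xe^{-\varepsilon t})\,dt$ for $x\in(0,\infty)$. If $f\in\mathcal{F}_\mathrm{convex}^\nearrow(0,\infty)$, then $f_\varepsilon\in\mathcal{F}_\mathrm{convex}^\nearrow(0,\infty)$ for every $\varepsilon>0$ and $\hat f_\varepsilon\to\hat f$ as $\varepsilon\searrow0$ uniformly on every bounded closed interval of $(0,\infty)$. If $f\in\mathcal{F}_\mathrm{concave}^\nearrow(0,\infty)$, then $f_\varepsilon\in\mathcal{F}_\mathrm{concave}^\nearrow(0,\infty)$ for every $\varepsilon>0$ and $\check f_\varepsilon\to\check f$ as $\varepsilon\searrow0$ uniformly on every bounded closed interval of $(0,\infty)$.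
   Context: $\mathcal{F}_\mathrm{convex}^\nearrow(0,\infty)$ is the set of non-decreasing convex real functions $f$ on $(0,\infty)$ with $\lim_{x\to\infty}f(x)/x=+\infty$; for such $f$, $\hat f(t):=\sup_{x>0}\{xt-f(x)\}$, $t>0$. $\mathcal{F}_\mathrm{concave}^\nearrow(0,\infty)$ is the set of non-decreasing concave real functions $f$ on $(0,\infty)$ with $\lim_{x\to\infty}f(x)/x=0$; for such $f$, $\check f(t):=\inf_{x>0}\{xt-f(x)\}$, $t>0$. *)

theory Defs
  imports "HOL-Analysis.Analysis"
begin

definition smooth_real :: "(real \<Rightarrow> real) \<Rightarrow> bool" where
  "smooth_real g \<longleftrightarrow> (\<forall>n x. (deriv ^^ n) g differentiable (at x))"

definition F_convex_inc :: "(real \<Rightarrow> real) \<Rightarrow> bool" where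
  "F_convex_inc f \<longleftrightarrow> mono_on {0<..} f \<and> convex_on {0<..} f \<and>
     filterlim (\<lambda>x. f x / x) at_top at_top"

definition F_concave_inc :: "(real \<Rightarrow> real) \<Rightarrow> bool" where
  "F_concave_inc f \<longleftrightarrow> mono_on {0<..} f \<and> concave_on {0<..} f \<and>
     ((\<lambda>x. f x / x) \<longlongrightarrow> 0) at_top"

definition conj_hat :: "(real \<Rightarrow> real) \<Rightarrow> real \<Rightarrow> real" where
  "conj_hat f t = (SUP x\<in>{0<..}. x * t - f x)"

definition conj_check :: "(real \<Rightarrow> real) \<Rightarrow> real \<Rightarrow> real" where
  "conj_check f t = (INF x\<in>{0<..}. x * t - f x)"

definition regularize :: "(real \<Rightarrow> real) \<Rightarrow> real \<Rightarrow> (real \<Rightarrow> real) \<Rightarrow> real \<Rightarrow> real" where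
  "regularize \<phi> \<epsilon> f x = integral {-1..1} (\<lambda>t. \<phi> t * f (x * exp (- \<epsilon> * t)))"

end

theory Submission
  imports Defs
begin

text \<open>
  Since \<phi> \<ge> 0 has mass one on [-1,1] and f is nondecreasing, the average f_\<epsilon> is squeezed
  between two dilations of f: f(x e^(-\<epsilon>)) \<le> f_\<epsilon>(x) \<le> f(x e^\<epsilon>). Averaging preserves monotonicity
  and convexity (concavity), and the squeeze preserves super- (sub-)linear growth.
  Both conjugates are antitone in the function and turn the dilation x \<mapsto> x c of the variable
  into the dilation t \<mapsto> t / c, so the squeeze becomes g(t e^(-\<epsilon>)) \<le> g_\<epsilon>(t) \<le> g(t e^\<epsilon>) for the
  conjugates g of f and g_\<epsilon> of f_\<epsilon>. Being convex (concave), g is continuous on (0,\<infinity>), hence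
  uniformly continuous on compact subintervals, and the squeeze yields uniform convergence.
\<close>

lemma smooth_real_imp_continuous_on: "smooth_real \<phi> \<Longrightarrow> continuous_on S \<phi>"
  unfolding smooth_real_def
  by (metis funpow_0 continuous_at_imp_continuous_on differentiable_imp_continuous_within)

lemma concave_on_continuous:
  fixes f :: "'a::euclidean_space \<Rightarrow> real"
  assumes "open S" "concave_on S f"
  shows "continuous_on S f"
  using continuous_on_minus[OF convex_on_continuous[OF assms(1) assms(2)[unfolded concave_on_def]]]
  by simp

lemma continuous_on_comp_dilation:
  fixes f :: "real \<Rightarrow> real"
  assumes "continuous_on {0<..} f" "x > 0"
  shows "continuous_on S (\<lambda>t. f (x * exp (c * t)))"
  by (rule continuous_on_compose2[OF assms(1)]) (use assms(2) in \<open>auto intro!: continuous_intros\<close>)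

lemma integral_weighted_le:
  fixes \<phi> g h :: "real \<Rightarrow> real"
  assumes "continuous_on {a..b} \<phi>" "continuous_on {a..b} g" "continuous_on {a..b} h"
    and "\<And>t. t \<in> {a..b} \<Longrightarrow> 0 \<le> \<phi> t" "\<And>t. t \<in> {a..b} \<Longrightarrow> g t \<le> h t"
  shows "integral {a..b} (\<lambda>t. \<phi> t * g t) \<le> integral {a..b} (\<lambda>t. \<phi> t * h t)"
  using assms by (intro integral_le integrable_continuous_interval continuous_intros mult_left_mono) auto

lemma regularize_const: "regularize \<phi> \<epsilon> (\<lambda>_. c) x = c * integral {-1..1} \<phi>"
  by (simp add: regularize_def mult.commute)

lemma regularize_le:
  fixes \<phi> f g :: "real \<Rightarrow> real"
  assumes "continuous_on {-1..1} \<phi>" "\<And>t. 0 \<le> \<phi> t"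
    and "continuous_on {0<..} f" "continuous_on {0<..} g" "x > 0" "y > 0"
    and "\<And>t. t \<in> {-1..1} \<Longrightarrow> f (x * exp (- \<epsilon> * t)) \<le> g (y * exp (- \<epsilon> * t))"
  shows "regularize \<phi> \<epsilon> f x \<le> regularize \<phi> \<epsilon> g y"
  unfolding regularize_def
  using assms by (intro integral_weighted_le continuous_on_comp_dilation) auto

lemma regularize_between_dilations:
  fixes \<phi> f :: "real \<Rightarrow> real"
  assumes "continuous_on {-1..1} \<phi>" "\<And>t. 0 \<le> \<phi> t" "integral {-1..1} \<phi> = 1"
    and "continuous_on {0<..} f" "mono_on {0<..} f" "x > 0" "\<epsilon> \<ge> 0"
  shows "f (x * exp (- \<epsilon>)) \<le> regularize \<phi> \<epsilon> f x" and "regularize \<phi> \<epsilon> f x \<le> f (x * exp \<epsilon>)"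
proof -
  have "regularize \<phi> \<epsilon> (\<lambda>_. f (x * exp (- \<epsilon>))) x \<le> regularize \<phi> \<epsilon> f x"
  proof (rule regularize_le)
    fix t :: real assume "t \<in> {-1..1}"
    then have "\<epsilon> * t \<le> \<epsilon>" using \<open>\<epsilon> \<ge> 0\<close> mult_left_le[of t \<epsilon>] by simp
    then show "f (x * exp (- \<epsilon>)) \<le> f (x * exp (- \<epsilon> * t))"
      by (intro mono_onD[OF assms(5)]) (use assms(6) in simp_all)
  qed (simp_all add: assms)
  then show "f (x * exp (- \<epsilon>)) \<le> regularize \<phi> \<epsilon> f x"
    by (simp add: regularize_const assms(3))
  have "regularize \<phi> \<epsilon> f x \<le> regularize \<phi> \<epsilon> (\<lambda>_. f (x * exp \<epsilon>)) x"
  proof (rule regularize_le)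
    fix t :: real assume "t \<in> {-1..1}"
    then have "- \<epsilon> * t \<le> \<epsilon>" using \<open>\<epsilon> \<ge> 0\<close> mult_left_le[of "- t" \<epsilon>] by simp
    then show "f (x * exp (- \<epsilon> * t)) \<le> f (x * exp \<epsilon>)"
      by (intro mono_onD[OF assms(5)]) (use assms(6) in simp_all)
  qed (simp_all add: assms)
  then show "regularize \<phi> \<epsilon> f x \<le> f (x * exp \<epsilon>)"
    by (simp add: regularize_const assms(3))
qed

lemma mono_on_regularize:
  fixes \<phi> f :: "real \<Rightarrow> real"
  assumes "continuous_on {-1..1} \<phi>" "\<And>t. 0 \<le> \<phi> t"
    and "continuous_on {0<..} f" "mono_on {0<..} f"
  shows "mono_on {0<..} (regularize \<phi> \<epsilon> f)"
  by (rule mono_onI, rule regularize_le) (use assms in \<open>auto intro!: mono_onD[OF assms(4)]\<close>)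

lemma convex_on_regularize:
  fixes \<phi> f :: "real \<Rightarrow> real"
  assumes "continuous_on {-1..1} \<phi>" "\<And>t. 0 \<le> \<phi> t"
    and "continuous_on {0<..} f" "convex_on {0<..} f"
  shows "convex_on {0<..} (regularize \<phi> \<epsilon> f)"
proof (rule convex_onI)
  fix u x y :: real assume u: "0 < u" "u < 1" and x: "x \<in> {0<..}" and y: "y \<in> {0<..}"
  define F where "F z t = f (z * exp (- \<epsilon> * t))" for z t
  have cont: "continuous_on {-1..1} (F z)" if "z > 0" for z
    unfolding F_def using assms(3) that by (rule continuous_on_comp_dilation)
  have int: "(\<lambda>t. \<phi> t * F z t) integrable_on {-1..1}" if "z > 0" for z
    using assms(1) cont[OF that] by (intro integrable_continuous_interval continuous_intros)
  have z: "(1 - u) * x + u * y > 0"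
    using u x y by (intro add_pos_pos mult_pos_pos) auto
  have "regularize \<phi> \<epsilon> f ((1 - u) *\<^sub>R x + u *\<^sub>R y)
      = integral {-1..1} (\<lambda>t. \<phi> t * F ((1 - u) * x + u * y) t)"
    by (simp add: regularize_def F_def)
  also have "\<dots> \<le> integral {-1..1} (\<lambda>t. \<phi> t * ((1 - u) * F x t + u * F y t))"
  proof (rule integral_weighted_le)
    fix t :: real
    have "F ((1 - u) * x + u * y) t
        = f ((1 - u) *\<^sub>R (x * exp (- \<epsilon> * t)) + u *\<^sub>R (y * exp (- \<epsilon> * t)))"
      by (simp add: F_def algebra_simps)
    also have "\<dots> \<le> (1 - u) * F x t + u * F y t"
      unfolding F_def using u x y by (intro convex_onD[OF assms(4)]) auto
    finally show "F ((1 - u) * x + u * y) t \<le> (1 - u) * F x t + u * F y t" .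
  qed (use assms cont x y z in \<open>auto intro!: continuous_intros\<close>)
  also have "\<dots> = integral {-1..1} (\<lambda>t. (1 - u) * (\<phi> t * F x t) + u * (\<phi> t * F y t))"
    by (simp add: algebra_simps)
  also have "\<dots> = (1 - u) * regularize \<phi> \<epsilon> f x + u * regularize \<phi> \<epsilon> f y"
    using int x y unfolding regularize_def F_def
    by (subst integral_add) (auto intro: integrable_on_mult_right)
  finally show "regularize \<phi> \<epsilon> f ((1 - u) *\<^sub>R x + u *\<^sub>R y)
      \<le> (1 - u) * regularize \<phi> \<epsilon> f x + u * regularize \<phi> \<epsilon> f y" .
qed simp

lemma regularize_uminus: "regularize \<phi> \<epsilon> (\<lambda>x. - f x) = (\<lambda>x. - regularize \<phi> \<epsilon> f x)"
  by (simp add: fun_eq_iff regularize_def flip: integral_neg)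

lemma concave_on_regularize:
  fixes \<phi> f :: "real \<Rightarrow> real"
  assumes "continuous_on {-1..1} \<phi>" "\<And>t. 0 \<le> \<phi> t"
    and "continuous_on {0<..} f" "concave_on {0<..} f"
  shows "concave_on {0<..} (regularize \<phi> \<epsilon> f)"
  using convex_on_regularize[of \<phi> "\<lambda>x. - f x"] assms
  by (simp add: concave_on_def regularize_uminus continuous_on_minus)

lemma eventually_dilation_div:
  fixes f :: "real \<Rightarrow> real"
  assumes "c > 0"
  shows "\<forall>\<^sub>F x in at_top. f (x * c) / x = c * (f (x * c) / (x * c))"
  using eventually_gt_at_top[of 0] by eventually_elim (use assms in \<open>simp add: field_simps\<close>)

lemma superlinear_dilation:
  fixes f :: "real \<Rightarrow> real"
  assumes "filterlim (\<lambda>x. f x / x) at_top at_top" "c > 0"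
  shows "filterlim (\<lambda>x. f (x * c) / x) at_top at_top"
proof -
  have "filterlim (\<lambda>x. f (x * c) / (x * c)) at_top at_top"
    by (rule filterlim_compose[OF assms(1)])
       (rule filterlim_at_top_mult_tendsto_pos[OF tendsto_const assms(2) filterlim_ident])
  then have "filterlim (\<lambda>x. c * (f (x * c) / (x * c))) at_top at_top"
    by (rule filterlim_tendsto_pos_mult_at_top[OF tendsto_const assms(2)])
  then show ?thesis
    using filterlim_cong[OF refl refl eventually_dilation_div[OF assms(2)]] by simp
qed

lemma sublinear_dilation:
  fixes f :: "real \<Rightarrow> real"
  assumes "((\<lambda>x. f x / x) \<longlongrightarrow> 0) at_top" "c > 0"
  shows "((\<lambda>x. f (x * c) / x) \<longlongrightarrow> 0) at_top"
proof -
  have "((\<lambda>x. f (x * c) / (x * c)) \<longlongrightarrow> 0) at_top"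
    by (rule filterlim_compose[OF assms(1)])
       (rule filterlim_at_top_mult_tendsto_pos[OF tendsto_const assms(2) filterlim_ident])
  then have "((\<lambda>x. c * (f (x * c) / (x * c))) \<longlongrightarrow> 0) at_top"
    using tendsto_mult_right_zero by blast
  then show ?thesis
    using tendsto_cong[OF eventually_dilation_div[OF assms(2)]] by simp
qed

lemma F_convex_inc_regularize:
  fixes \<phi> f :: "real \<Rightarrow> real"
  assumes "continuous_on {-1..1} \<phi>" "\<And>t. 0 \<le> \<phi> t" "integral {-1..1} \<phi> = 1"
    and "F_convex_inc f" "\<epsilon> > 0"
  shows "F_convex_inc (regularize \<phi> \<epsilon> f)"
proof -
  have mono: "mono_on {0<..} f" and convex: "convex_on {0<..} f"
    and lim: "filterlim (\<lambda>x. f x / x) at_top at_top"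
    using \<open>F_convex_inc f\<close> unfolding F_convex_inc_def by blast+
  have cont: "continuous_on {0<..} f"
    using convex by (rule convex_on_continuous[OF open_greaterThan])
  note bounds = regularize_between_dilations[OF assms(1-3) cont mono _ less_imp_le[OF \<open>\<epsilon> > 0\<close>]]
  have "\<forall>\<^sub>F x in at_top. f (x * exp (- \<epsilon>)) / x \<le> regularize \<phi> \<epsilon> f x / x"
    using eventually_gt_at_top[of 0]
    by eventually_elim (rule divide_right_mono[OF bounds(1)], simp_all)
  with superlinear_dilation[OF lim exp_gt_zero]
  have "filterlim (\<lambda>x. regularize \<phi> \<epsilon> f x / x) at_top at_top"
    by (rule filterlim_at_top_mono)
  then show ?thesis unfolding F_convex_inc_def
    using mono_on_regularize[OF assms(1,2) cont mono] convex_on_regularize[OF assms(1,2) cont convex]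
    by blast
qed

lemma F_concave_inc_regularize:
  fixes \<phi> f :: "real \<Rightarrow> real"
  assumes "continuous_on {-1..1} \<phi>" "\<And>t. 0 \<le> \<phi> t" "integral {-1..1} \<phi> = 1"
    and "F_concave_inc f" "\<epsilon> > 0"
  shows "F_concave_inc (regularize \<phi> \<epsilon> f)"
proof -
  have mono: "mono_on {0<..} f" and concave: "concave_on {0<..} f"
    and lim: "((\<lambda>x. f x / x) \<longlongrightarrow> 0) at_top"
    using \<open>F_concave_inc f\<close> unfolding F_concave_inc_def by blast+
  have cont: "continuous_on {0<..} f"
    using concave by (rule concave_on_continuous[OF open_greaterThan])
  note bounds = regularize_between_dilations[OF assms(1-3) cont mono _ less_imp_le[OF \<open>\<epsilon> > 0\<close>]]
  have "\<forall>\<^sub>F x in at_top. f (x * exp (- \<epsilon>)) / x \<le> regularize \<phi> \<epsilon> f x / x"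
    using eventually_gt_at_top[of 0]
    by eventually_elim (rule divide_right_mono[OF bounds(1)], simp_all)
  moreover have "\<forall>\<^sub>F x in at_top. regularize \<phi> \<epsilon> f x / x \<le> f (x * exp \<epsilon>) / x"
    using eventually_gt_at_top[of 0]
    by eventually_elim (rule divide_right_mono[OF bounds(2)], simp_all)
  ultimately have "((\<lambda>x. regularize \<phi> \<epsilon> f x / x) \<longlongrightarrow> 0) at_top"
    using sublinear_dilation[OF lim exp_gt_zero[of "- \<epsilon>"]] sublinear_dilation[OF lim exp_gt_zero[of \<epsilon>]]
    by (rule tendsto_sandwich)
  then show ?thesis unfolding F_concave_inc_def
    using mono_on_regularize[OF assms(1,2) cont mono] concave_on_regularize[OF assms(1,2) cont concave]
    by blast
qed

lemma image_mult_right_greaterThan_0: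
  fixes c :: real
  assumes "c > 0"
  shows "(\<lambda>x. x * c) ` {0<..} = {0<..}"
proof
  show "{0<..} \<subseteq> (\<lambda>x. x * c) ` {0<..}"
  proof
    fix y :: real assume "y \<in> {0<..}"
    with assms show "y \<in> (\<lambda>x. x * c) ` {0<..}"
      by (intro rev_image_eqI[of "y / c"]) auto
  qed
qed (use assms in auto)

lemma conj_set_dilation:
  fixes f :: "real \<Rightarrow> real"
  assumes "c > 0"
  shows "(\<lambda>x. x * t - f (x * c)) ` {0<..} = (\<lambda>y. y * (t / c) - f y) ` {0<..}"
proof -
  have "(\<lambda>y. y * (t / c) - f y) ` {0<..} = (\<lambda>y. y * (t / c) - f y) ` (\<lambda>x. x * c) ` {0<..}"
    by (simp only: image_mult_right_greaterThan_0[OF assms])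
  also have "\<dots> = (\<lambda>x. x * c * (t / c) - f (x * c)) ` {0<..}"
    by (simp only: image_image)
  also have "\<dots> = (\<lambda>x. x * t - f (x * c)) ` {0<..}"
    using assms by (intro image_cong) auto
  finally show ?thesis by (rule sym)
qed

lemma conj_hat_dilation:
  assumes "c > 0"
  shows "conj_hat (\<lambda>x. f (x * c)) t = conj_hat f (t / c)"
  unfolding conj_hat_def conj_set_dilation[OF assms, of t f] ..

lemma conj_check_dilation:
  assumes "c > 0"
  shows "conj_check (\<lambda>x. f (x * c)) t = conj_check f (t / c)"
  unfolding conj_check_def conj_set_dilation[OF assms, of t f] ..

lemma conj_hat_antimono:
  assumes "bdd_above ((\<lambda>x. x * t - f x) ` {0<..})" "\<And>x. x > 0 \<Longrightarrow> f x \<le> g x"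
  shows "conj_hat g t \<le> conj_hat f t"
  unfolding conj_hat_def by (rule cSUP_mono) (use assms in \<open>auto intro!: bexI\<close>)

lemma conj_check_antimono:
  assumes "bdd_below ((\<lambda>x. x * t - g x) ` {0<..})" "\<And>x. x > 0 \<Longrightarrow> f x \<le> g x"
  shows "conj_check g t \<le> conj_check f t"
  unfolding conj_check_def by (rule cINF_mono) (use assms in \<open>auto intro!: bexI\<close>)

text \<open>The chord of f through 1 and 2 bounds f from below on (0,1).\<close>

lemma mono_convex_on_bounded_below:
  fixes f :: "real \<Rightarrow> real"
  assumes mono: "mono_on {0<..} f" and convex: "convex_on {0<..} f" and "x > 0"
  shows "2 * f 1 - f 2 \<le> f x"
proof (cases "x < 1")
  case True
  have "(f x - f 1) / (x - 1) \<le> (f x - f 2) / (x - 2)"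
    using convex_on_slope_le(1)[OF convex, of x 2 1] True \<open>x > 0\<close> by simp
  also have "\<dots> \<le> (f 1 - f 2) / (1 - 2)"
    using convex_on_slope_le(2)[OF convex, of x 2 1] True \<open>x > 0\<close> by simp
  finally have "(f 2 - f 1) * (x - 1) \<le> f x - f 1"
    using True by (simp add: divide_le_eq)
  moreover have "0 \<le> (f 2 - f 1) * x"
    using mono_onD[OF mono, of 1 2] \<open>x > 0\<close> by simp
  ultimately show ?thesis by (simp add: algebra_simps)
next
  case False
  then show ?thesis using mono_onD[OF mono, of 1 2] mono_onD[OF mono, of 1 x] by simp
qed

lemma bdd_above_conj_hat_set:
  fixes f :: "real \<Rightarrow> real"
  assumes "F_convex_inc f" "t > 0"
  shows "bdd_above ((\<lambda>x. x * t - f x) ` {0<..})"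
proof -
  have mono: "mono_on {0<..} f" and convex: "convex_on {0<..} f"
    and lim: "filterlim (\<lambda>x. f x / x) at_top at_top"
    using assms(1) unfolding F_convex_inc_def by blast+
  obtain N where N: "\<And>x. x \<ge> N \<Longrightarrow> t \<le> f x / x"
    using lim by (auto simp: filterlim_at_top eventually_at_top_linorder)
  define X where "X = max N 1"
  show ?thesis
  proof (rule bdd_aboveI2)
    fix x :: real assume x: "x \<in> {0<..}"
    show "x * t - f x \<le> max 0 (X * t - (2 * f 1 - f 2))"
    proof (cases "x \<ge> X")
      case True
      then have "t \<le> f x / x" using N by (simp add: X_def)
      with x show ?thesis by (simp add: field_simps)
    next
      case False
      then have "x * t \<le> X * t" using \<open>t > 0\<close> by simp
      with mono_convex_on_bounded_below[OF mono convex, of x] x show ?thesis by simp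
    qed
  qed
qed

lemma bdd_below_conj_check_set:
  fixes f :: "real \<Rightarrow> real"
  assumes "F_concave_inc f" "t > 0"
  shows "bdd_below ((\<lambda>x. x * t - f x) ` {0<..})"
proof -
  have mono: "mono_on {0<..} f" and lim: "((\<lambda>x. f x / x) \<longlongrightarrow> 0) at_top"
    using assms(1) unfolding F_concave_inc_def by blast+
  obtain N where N: "\<And>x. x \<ge> N \<Longrightarrow> f x / x < t"
    using order_tendstoD(2)[OF lim \<open>t > 0\<close>] by (auto simp: eventually_at_top_linorder)
  define X where "X = max N 1"
  show ?thesis
  proof (rule bdd_belowI2)
    fix x :: real assume x: "x \<in> {0<..}"
    show "min 0 (- f X) \<le> x * t - f x"
    proof (cases "x \<ge> X")
      case True
      then have "f x / x < t" using N by (simp add: X_def)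
      with x show ?thesis by (simp add: field_simps)
    next
      case False
      then have "f x \<le> f X" using x by (intro mono_onD[OF mono]) (auto simp: X_def)
      moreover have "0 \<le> x * t" using x \<open>t > 0\<close> by simp
      ultimately show ?thesis by simp
    qed
  qed
qed

lemma convex_on_conj_hat:
  fixes f :: "real \<Rightarrow> real"
  assumes bdd: "\<And>t. t > 0 \<Longrightarrow> bdd_above ((\<lambda>x. x * t - f x) ` {0<..})"
  shows "convex_on {0<..} (conj_hat f)"
proof (rule convex_onI)
  fix u a b :: real assume u: "0 < u" "u < 1" and a: "a \<in> {0<..}" and b: "b \<in> {0<..}"
  show "conj_hat f ((1 - u) *\<^sub>R a + u *\<^sub>R b) \<le> (1 - u) * conj_hat f a + u * conj_hat f b"
    unfolding conj_hat_def
  proof (rule cSUP_least)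
    fix x :: real assume x: "x \<in> {0<..}"
    have "x * ((1 - u) *\<^sub>R a + u *\<^sub>R b) - f x = (1 - u) * (x * a - f x) + u * (x * b - f x)"
      by (simp add: algebra_simps)
    also have "\<dots> \<le> (1 - u) * (SUP x\<in>{0<..}. x * a - f x) + u * (SUP x\<in>{0<..}. x * b - f x)"
      using u a b x by (intro add_mono mult_left_mono cSUP_upper bdd) auto
    finally show "x * ((1 - u) *\<^sub>R a + u *\<^sub>R b) - f x
        \<le> (1 - u) * (SUP x\<in>{0<..}. x * a - f x) + u * (SUP x\<in>{0<..}. x * b - f x)" .
  qed simp
qed simp

lemma concave_on_conj_check:
  fixes f :: "real \<Rightarrow> real"
  assumes bdd: "\<And>t. t > 0 \<Longrightarrow> bdd_below ((\<lambda>x. x * t - f x) ` {0<..})"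
  shows "concave_on {0<..} (conj_check f)"
proof (rule concave_on_linorderI)
  fix u a b :: real assume u: "0 < u" "u < 1" and a: "a \<in> {0<..}" and b: "b \<in> {0<..}"
  show "(1 - u) * conj_check f a + u * conj_check f b \<le> conj_check f ((1 - u) *\<^sub>R a + u *\<^sub>R b)"
    unfolding conj_check_def
  proof (rule cINF_greatest)
    fix x :: real assume x: "x \<in> {0<..}"
    have "(1 - u) * (INF x\<in>{0<..}. x * a - f x) + u * (INF x\<in>{0<..}. x * b - f x)
        \<le> (1 - u) * (x * a - f x) + u * (x * b - f x)"
      using u a b x by (intro add_mono mult_left_mono cINF_lower bdd) auto
    also have "\<dots> = x * ((1 - u) *\<^sub>R a + u *\<^sub>R b) - f x"
      by (simp add: algebra_simps)
    finally show "(1 - u) * (INF x\<in>{0<..}. x * a - f x) + u * (INF x\<in>{0<..}. x * b - f x)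
        \<le> x * ((1 - u) *\<^sub>R a + u *\<^sub>R b) - f x" .
  qed simp
qed simp

lemma continuous_on_conj_hat: "F_convex_inc f \<Longrightarrow> continuous_on {0<..} (conj_hat f)"
  by (rule convex_on_continuous[OF open_greaterThan convex_on_conj_hat[OF bdd_above_conj_hat_set]])

lemma continuous_on_conj_check: "F_concave_inc f \<Longrightarrow> continuous_on {0<..} (conj_check f)"
  by (rule concave_on_continuous[OF open_greaterThan concave_on_conj_check[OF bdd_below_conj_check_set]])

lemma conj_hat_regularize_bounds:
  fixes \<phi> f :: "real \<Rightarrow> real"
  assumes "continuous_on {-1..1} \<phi>" "\<And>t. 0 \<le> \<phi> t" "integral {-1..1} \<phi> = 1"
    and "F_convex_inc f" "\<epsilon> > 0" "t > 0"
  shows "conj_hat f (t * exp (- \<epsilon>)) \<le> conj_hat (regularize \<phi> \<epsilon> f) t"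
    and "conj_hat (regularize \<phi> \<epsilon> f) t \<le> conj_hat f (t * exp \<epsilon>)"
proof -
  have mono: "mono_on {0<..} f" and convex: "convex_on {0<..} f"
    using \<open>F_convex_inc f\<close> unfolding F_convex_inc_def by blast+
  have cont: "continuous_on {0<..} f"
    using convex by (rule convex_on_continuous[OF open_greaterThan])
  note bounds = regularize_between_dilations[OF assms(1-3) cont mono _ less_imp_le[OF \<open>\<epsilon> > 0\<close>]]
  have "conj_hat f (t * exp (- \<epsilon>)) = conj_hat (\<lambda>x. f (x * exp \<epsilon>)) t"
    using conj_hat_dilation[OF exp_gt_zero[of \<epsilon>], of f t] by (simp add: exp_minus divide_inverse)
  also have "\<dots> \<le> conj_hat (regularize \<phi> \<epsilon> f) t"
    using bdd_above_conj_hat_set[OF F_convex_inc_regularize[OF assms(1-5)] \<open>t > 0\<close>] bounds(2)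
    by (rule conj_hat_antimono)
  finally show "conj_hat f (t * exp (- \<epsilon>)) \<le> conj_hat (regularize \<phi> \<epsilon> f) t" .
  have "bdd_above ((\<lambda>x. x * t - f (x * exp (- \<epsilon>))) ` {0<..})"
    unfolding conj_set_dilation[OF exp_gt_zero]
    using \<open>t > 0\<close> by (intro bdd_above_conj_hat_set[OF assms(4)]) simp
  then have "conj_hat (regularize \<phi> \<epsilon> f) t \<le> conj_hat (\<lambda>x. f (x * exp (- \<epsilon>))) t"
    using bounds(1) by (rule conj_hat_antimono)
  also have "\<dots> = conj_hat f (t * exp \<epsilon>)"
    using conj_hat_dilation[OF exp_gt_zero[of "- \<epsilon>"], of f t] by (simp add: exp_minus divide_inverse)
  finally show "conj_hat (regularize \<phi> \<epsilon> f) t \<le> conj_hat f (t * exp \<epsilon>)" .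
qed

lemma conj_check_regularize_bounds:
  fixes \<phi> f :: "real \<Rightarrow> real"
  assumes "continuous_on {-1..1} \<phi>" "\<And>t. 0 \<le> \<phi> t" "integral {-1..1} \<phi> = 1"
    and "F_concave_inc f" "\<epsilon> > 0" "t > 0"
  shows "conj_check f (t * exp (- \<epsilon>)) \<le> conj_check (regularize \<phi> \<epsilon> f) t"
    and "conj_check (regularize \<phi> \<epsilon> f) t \<le> conj_check f (t * exp \<epsilon>)"
proof -
  have mono: "mono_on {0<..} f" and concave: "concave_on {0<..} f"
    using \<open>F_concave_inc f\<close> unfolding F_concave_inc_def by blast+
  have cont: "continuous_on {0<..} f"
    using concave by (rule concave_on_continuous[OF open_greaterThan])
  note bounds = regularize_between_dilations[OF assms(1-3) cont mono _ less_imp_le[OF \<open>\<epsilon> > 0\<close>]]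
  have "bdd_below ((\<lambda>x. x * t - f (x * exp \<epsilon>)) ` {0<..})"
    unfolding conj_set_dilation[OF exp_gt_zero]
    using \<open>t > 0\<close> by (intro bdd_below_conj_check_set[OF assms(4)]) simp
  then have "conj_check (\<lambda>x. f (x * exp \<epsilon>)) t \<le> conj_check (regularize \<phi> \<epsilon> f) t"
    using bounds(2) by (rule conj_check_antimono)
  moreover have "conj_check f (t * exp (- \<epsilon>)) = conj_check (\<lambda>x. f (x * exp \<epsilon>)) t"
    using conj_check_dilation[OF exp_gt_zero[of \<epsilon>], of f t] by (simp add: exp_minus divide_inverse)
  ultimately show "conj_check f (t * exp (- \<epsilon>)) \<le> conj_check (regularize \<phi> \<epsilon> f) t"
    by simp
  have "conj_check (regularize \<phi> \<epsilon> f) t \<le> conj_check (\<lambda>x. f (x * exp (- \<epsilon>))) t"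
    using bdd_below_conj_check_set[OF F_concave_inc_regularize[OF assms(1-5)] \<open>t > 0\<close>] bounds(1)
    by (rule conj_check_antimono)
  also have "\<dots> = conj_check f (t * exp \<epsilon>)"
    using conj_check_dilation[OF exp_gt_zero[of "- \<epsilon>"], of f t] by (simp add: exp_minus divide_inverse)
  finally show "conj_check (regularize \<phi> \<epsilon> f) t \<le> conj_check f (t * exp \<epsilon>)" .
qed

lemma uniform_limit_sandwich:
  fixes f g G :: "'a \<Rightarrow> 'b \<Rightarrow> real"
  assumes "uniform_limit S f l F" "uniform_limit S g l F"
    and "\<forall>\<^sub>F n in F. \<forall>x\<in>S. f n x \<le> G n x \<and> G n x \<le> g n x"
  shows "uniform_limit S G l F"
proof (rule uniform_limitI)
  fix e :: real assume "e > 0"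
  show "\<forall>\<^sub>F n in F. \<forall>x\<in>S. dist (G n x) (l x) < e"
    using uniform_limitD[OF assms(1) \<open>e > 0\<close>] uniform_limitD[OF assms(2) \<open>e > 0\<close>] assms(3)
    by eventually_elim (fastforce simp: dist_real_def)
qed

lemma uniform_limit_mult_exp:
  fixes c :: "'a \<Rightarrow> real"
  assumes "(c \<longlongrightarrow> 0) F"
  shows "uniform_limit {a..b} (\<lambda>s t. t * exp (c s)) (\<lambda>t. t) F"
proof (rule uniform_limitI)
  fix e :: real assume "e > 0"
  define B where "B = max \<bar>a\<bar> \<bar>b\<bar> + 1"
  have "B > 0" by (simp add: B_def add_nonneg_pos)
  have "((\<lambda>s. exp (c s)) \<longlongrightarrow> 1) F"
    using tendsto_exp[OF assms] by simp
  then have "\<forall>\<^sub>F s in F. \<bar>exp (c s) - 1\<bar> < e / B"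
    using \<open>e > 0\<close> \<open>B > 0\<close> by (auto dest: tendstoD[of _ _ _ "e / B"] simp: dist_real_def)
  then show "\<forall>\<^sub>F s in F. \<forall>t\<in>{a..b}. dist (t * exp (c s)) t < e"
  proof eventually_elim
    case (elim s)
    show ?case
    proof
      fix t assume "t \<in> {a..b}"
      then have "\<bar>t\<bar> \<le> B" by (auto simp: B_def)
      have "dist (t * exp (c s)) t = \<bar>t\<bar> * \<bar>exp (c s) - 1\<bar>"
        by (simp add: dist_real_def abs_mult[symmetric] algebra_simps)
      also have "\<dots> \<le> B * \<bar>exp (c s) - 1\<bar>"
        using \<open>\<bar>t\<bar> \<le> B\<close> by (simp add: mult_right_mono)
      also have "\<dots> < e"
        using elim \<open>B > 0\<close> by (simp add: field_simps)
      finally show "dist (t * exp (c s)) t < e" .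
    qed
  qed
qed

lemma uniform_limit_comp_dilation:
  fixes h :: "real \<Rightarrow> real" and c :: "'a \<Rightarrow> real"
  assumes "continuous_on {0<..} h" "0 < a" "(c \<longlongrightarrow> 0) F"
  shows "uniform_limit {a..b} (\<lambda>s t. h (t * exp (c s))) h F"
proof -
  define K where "K = {a * exp (- 1) .. b * exp 1}"
  have "K \<subseteq> {0<..}"
    using \<open>0 < a\<close> by (auto simp: K_def intro: less_le_trans[of 0 "a * exp (- 1)"])
  then have "uniformly_continuous_on K h"
    unfolding K_def by (intro compact_uniformly_continuous continuous_on_subset[OF assms(1)]) auto
  moreover have "\<forall>\<^sub>F s in F. (\<lambda>t. t * exp (c s)) ` {a..b} \<subseteq> K"
    using tendstoD[OF assms(3) zero_less_one]
  proof eventually_elim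
    case (elim s)
    then have "exp (- 1) \<le> exp (c s)" "exp (c s) \<le> exp 1" by (simp_all add: dist_real_def)
    with \<open>0 < a\<close> show ?case
      unfolding K_def by (auto intro!: mult_mono)
  qed
  moreover have "(\<lambda>t. t) ` {a..b} \<subseteq> K"
    using \<open>0 < a\<close> unfolding K_def
    by (auto intro!: order_trans[OF mult_left_le[of "exp (- 1)" a]] order_trans[OF _ mult_left_mono[of 1 "exp 1"]])
  ultimately show ?thesis
    using uniform_limit_compose[OF uniform_limit_mult_exp[OF assms(3)]] by (simp add: o_def)
qed

lemma tendsto_uminus_at_right_0: "((\<lambda>x. - x) \<longlongrightarrow> (0::real)) (at_right 0)"
  using tendsto_minus[OF tendsto_ident_at[of "0::real" "{0<..}"]] by simp

lemma uniform_limit_conj_hat_regularize: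
  fixes \<phi> f :: "real \<Rightarrow> real"
  assumes "continuous_on {-1..1} \<phi>" "\<And>t. 0 \<le> \<phi> t" "integral {-1..1} \<phi> = 1"
    and "F_convex_inc f" "0 < a"
  shows "uniform_limit {a..b} (\<lambda>\<epsilon>. conj_hat (regularize \<phi> \<epsilon> f)) (conj_hat f) (at_right 0)"
proof (rule uniform_limit_sandwich)
  note cont = continuous_on_conj_hat[OF assms(4)]
  show "uniform_limit {a..b} (\<lambda>\<epsilon> t. conj_hat f (t * exp (- \<epsilon>))) (conj_hat f) (at_right 0)"
    using uniform_limit_comp_dilation[OF cont \<open>0 < a\<close> tendsto_uminus_at_right_0] .
  show "uniform_limit {a..b} (\<lambda>\<epsilon> t. conj_hat f (t * exp \<epsilon>)) (conj_hat f) (at_right 0)"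
    using uniform_limit_comp_dilation[OF cont \<open>0 < a\<close> tendsto_ident_at] .
  show "\<forall>\<^sub>F \<epsilon> in at_right 0. \<forall>t\<in>{a..b}. conj_hat f (t * exp (- \<epsilon>)) \<le> conj_hat (regularize \<phi> \<epsilon> f) t
      \<and> conj_hat (regularize \<phi> \<epsilon> f) t \<le> conj_hat f (t * exp \<epsilon>)"
    using eventually_at_right_less
    by eventually_elim (use assms conj_hat_regularize_bounds[OF assms(1-4)] in auto)
qed

lemma uniform_limit_conj_check_regularize:
  fixes \<phi> f :: "real \<Rightarrow> real"
  assumes "continuous_on {-1..1} \<phi>" "\<And>t. 0 \<le> \<phi> t" "integral {-1..1} \<phi> = 1"
    and "F_concave_inc f" "0 < a"
  shows "uniform_limit {a..b} (\<lambda>\<epsilon>. conj_check (regularize \<phi> \<epsilon> f)) (conj_check f) (at_right 0)"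
proof (rule uniform_limit_sandwich)
  note cont = continuous_on_conj_check[OF assms(4)]
  show "uniform_limit {a..b} (\<lambda>\<epsilon> t. conj_check f (t * exp (- \<epsilon>))) (conj_check f) (at_right 0)"
    using uniform_limit_comp_dilation[OF cont \<open>0 < a\<close> tendsto_uminus_at_right_0] .
  show "uniform_limit {a..b} (\<lambda>\<epsilon> t. conj_check f (t * exp \<epsilon>)) (conj_check f) (at_right 0)"
    using uniform_limit_comp_dilation[OF cont \<open>0 < a\<close> tendsto_ident_at] .
  show "\<forall>\<^sub>F \<epsilon> in at_right 0. \<forall>t\<in>{a..b}. conj_check f (t * exp (- \<epsilon>)) \<le> conj_check (regularize \<phi> \<epsilon> f) t
      \<and> conj_check (regularize \<phi> \<epsilon> f) t \<le> conj_check f (t * exp \<epsilon>)"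
    using eventually_at_right_less
    by eventually_elim (use assms conj_check_regularize_bounds[OF assms(1-4)] in auto)
qed

theorem lemmaA3:
  fixes \<phi> :: "real \<Rightarrow> real"
  assumes smooth: "smooth_real \<phi>"
    and supp: "\<And>t. t \<notin> {-1..1} \<Longrightarrow> \<phi> t = 0"
    and nonneg: "\<And>t. \<phi> t \<ge> 0"
    and int1: "integral {-1..1} \<phi> = 1"
  shows
    "(\<forall>f. F_convex_inc f \<longrightarrow>
        (\<forall>\<epsilon>>0. F_convex_inc (regularize \<phi> \<epsilon> f)) \<and>
        (\<forall>a b. 0 < a \<longrightarrow> a \<le> b \<longrightarrow>
           uniform_limit {a..b} (\<lambda>\<epsilon>. conj_hat (regularize \<phi> \<epsilon> f)) (conj_hat f) (at_right 0)))
     \<and>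
     (\<forall>f. F_concave_inc f \<longrightarrow>
        (\<forall>\<epsilon>>0. F_concave_inc (regularize \<phi> \<epsilon> f)) \<and>
        (\<forall>a b. 0 < a \<longrightarrow> a \<le> b \<longrightarrow>
           uniform_limit {a..b} (\<lambda>\<epsilon>. conj_check (regularize \<phi> \<epsilon> f)) (conj_check f) (at_right 0)))"
proof -
  \<comment> \<open>Smoothness is only used through continuity.\<close>
  have cont: "continuous_on {-1..1} \<phi>"
    using smooth by (rule smooth_real_imp_continuous_on)
  note assms' = cont nonneg int1
  show ?thesis
    using F_convex_inc_regularize[OF assms'] uniform_limit_conj_hat_regularize[OF assms']
      F_concave_inc_regularize[OF assms'] uniform_limit_conj_check_regularize[OF assms']
    by blast
qed

end
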